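(* Let $1\le k\le n$ and let $f\in L^2\Lambda^k(\Omega)$ with $f\in\mathfrak{B}^k$. Let $\mathcal{T}_h$ and $\mathcal{T}_H$ be nested triangulations ($\mathcal{T}_h$ a refinement of $\mathcal{T}_H$). Write - $(\sigma,u,p)=\mathcal{L}^{-1}f$, - $(\sigma_h,u_h,p_h)=\mathcal{L}_h^{-1}f_{\mathfrak{B}_h}$, - $(\tilde\sigma_h,\tilde u_h,\tilde p_h)=\mathcal{L}_h^{-1}f_{\mathfrak{B}_H}$, - $(\sigma_H,u_H,p_H)=\mathcal{L}_H^{-1}f_{\mathfrak{B}_H}$. Then $\langle\sigma-\sigma_h,\tilde\sigma_h-\sigma_H\rangle=0$.
   Context: Let $\Omega\subset\mathbb{R}^n$ ($n\ge 2$) be a bounded Lipschitz polyhedral domain. Notation for forms: - $L^2\Lambda^j(\Omega)$ is the space of square-integrable $j$-forms, with inner product $\langle\cdot,\cdot\rangle$. - $d$ is the exterior derivative, and $H\Lambda^j(\Omega)=\{\omega\in L^2\Lambda^j: d\omega\in L^2\Lambda^{j+1}\}$. - $\mathfrak{B}^j=dH\Lambda^{j-1}(\Omega)$ and $\mathfrak{Z}^j=\ker d\cap H\Lambda^j$. - $\mathfrak{H}^j=\mathfrak{Z}^j\cap(\mathfrak{B}^j)^\perp$, with $\perp$ the $L^2$-orthogonal complement. Continuous problem: for $g\in L^2\Lambda^k(\Omega)$, $\mathcal{L}^{-1}g=(\sigma,u,p)\in H\Lambda^{k-1}\times H\Lambda^k\times\mathfrak{H}^k$ is the unique solution of - $\langle\sigma,\tau\rangle-\langle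 d\tau,u\rangle=0$ for all $\tau\in H\Lambda^{k-1}$, - $\langle d\sigma,v\rangle+\langle du,dv\rangle+\langle p,v\rangle=\langle g,v\rangle$ for all $v\in H\Lambda^k$, - $\langle u,q\rangle=0$ for all $q\in\mathfrak{H}^k$. Discrete spaces: for a conforming shape-regular simplicial triangulation $\mathcal{T}_h$, the spaces $\Lambda^j_h(\Omega)\subset H\Lambda^j(\Omega)$ are Arnold–Falk–Winther finite element spaces of forms (from $\mathcal{P}_r\Lambda^j$, $\mathcal{P}^-_r\Lambda^j$). They form a subcomplex ($d\Lambda^j_h\subset\Lambda^{j+1}_h$) with bounded commuting cochain projections, and they are nested under refinement. Set $\mathfrak{B}^j_h=d\Lambda^{j-1}_h$, $\mathfrak{Z}_h^j=\ker d\cap\Lambda^j_h$, and $\mathfrak{H}^j_h=\mathfrak{Z}^j_h\cap(\mathfrak{B}^j_h)^\perp$. Discrete problem: $\mathcal{L}_h^{-1}g=(\sigma_h,u_h,p_h)\in\Lambda^{k-1}_h\times\Lambda^k_h\times\mathfrak{H}^k_h$ is the unique solution of the same three equations with test spaces $\Lambda^{k-1}_h,\Lambda^k_h,\mathfrak{H}^k_h$. $\mathcal{L}_H^{-1}$ is defined analogously on $\mathcal{T}_H$. $g_{\mathfrak{B}_h}$ denotes the $L^2$-orthogonal projection of $g$ onto $\mathfrak{B}^k_h$, and similarly for $H$. *)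

theory Defs
  imports "HOL-Analysis.Analysis"
begin

text \<open>Abstract rendering of the relevant part of the L2 de Rham complex
  (degrees k-1, k, k+1):  L2 forms of degree k-1, k, k+1 are modelled by
  real inner product spaces of types 'a, 'b, 'c; the domains H Lambda^(k-1),
  H Lambda^k are subspaces V0, V1, and the exterior derivatives are d0, d1.\<close>

definition orth_proj :: "'a::real_inner set \<Rightarrow> 'a \<Rightarrow> 'a" where
  "orth_proj S g = (THE y. y \<in> S \<and> (\<forall>z\<in>S. inner (g - y) z = 0))"

definition harmonic ::
  "'a::real_inner set \<Rightarrow> 'b::real_inner set \<Rightarrow> ('a \<Rightarrow> 'b) \<Rightarrow> ('b \<Rightarrow> 'c::real_inner) \<Rightarrow> 'b set" where
  "harmonic V0 V1 d0 d1 = {q \<in> V1. d1 q = 0 \<and> (\<forall>b\<in>d0 ` V0. inner q b = 0)}"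

definition hodge_solution ::
  "'a::real_inner set \<Rightarrow> 'b::real_inner set \<Rightarrow> ('a \<Rightarrow> 'b) \<Rightarrow> ('b \<Rightarrow> 'c::real_inner)
   \<Rightarrow> 'b \<Rightarrow> 'a \<Rightarrow> 'b \<Rightarrow> 'b \<Rightarrow> bool" where
  "hodge_solution V0 V1 d0 d1 g \<sigma> u p \<longleftrightarrow>
     \<sigma> \<in> V0 \<and> u \<in> V1 \<and> p \<in> harmonic V0 V1 d0 d1 \<and>
     (\<forall>\<tau>\<in>V0. inner \<sigma> \<tau> - inner (d0 \<tau>) u = 0) \<and>
     (\<forall>v\<in>V1. inner (d0 \<sigma>) v + inner (d1 u) (d1 v) + inner p v = inner g v) \<and>
     (\<forall>q\<in>harmonic V0 V1 d0 d1. inner u q = 0)"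

definition finite_dim_subspace :: "'a::real_vector set \<Rightarrow> bool" where
  "finite_dim_subspace S \<longleftrightarrow> (\<exists>B. finite B \<and> S = span B)"

end

theory Submission
  imports Defs
begin

text \<open>Both \<open>\<tilde>\<sigma>\<^sub>h\<close> and \<open>\<sigma>\<^sub>H\<close> solve discrete problems whose data
  \<open>f\<^sub>\<B>\<^sub>H\<close> lies in \<open>d \<Lambda>\<^sub>H\<^sup>k\<^sup>-\<^sup>1 \<subseteq> d \<Lambda>\<^sub>h\<^sup>k\<^sup>-\<^sup>1\<close>; testing the second
  equation with \<open>d(\<sigma> - \<rho>)\<close>, where \<open>d\<rho>\<close> is the data, shows that the exterior
  derivative of the solution reproduces exact data. Hence \<open>\<tilde>\<sigma>\<^sub>h - \<sigma>\<^sub>H\<close>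
  is a closed form in \<open>\<Lambda>\<^sub>h\<^sup>k\<^sup>-\<^sup>1\<close>, and the first equation of the continuous and
  of the fine discrete problem makes both \<open>\<sigma>\<close> and \<open>\<sigma>\<^sub>h\<close> orthogonal to it.\<close>

lemma orthogonal_projection_onto_span_exists:
  fixes B :: "'a::real_inner set"
  assumes "finite B"
  shows "\<exists>y\<in>span B. \<forall>z\<in>span B. inner (x - y) z = 0"
  using assms
proof (induction B arbitrary: x rule: finite_induct)
  case empty
  then show ?case by auto
next
  case (insert b B)
  obtain yb where yb: "yb \<in> span B" "\<forall>z\<in>span B. inner (b - yb) z = 0"
    using insert.IH by blast
  obtain y0 where y0: "y0 \<in> span B" "\<forall>z\<in>span B. inner (x - y0) z = 0"
    using insert.IH by blast
  \<comment> \<open>One Gram--Schmidt step: correct \<open>y0\<close> along the component \<open>e\<close> of \<open>b\<close> orthogonal to \<open>span B\<close>.\<close>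
  define e where "e = b - yb"
  define y where "y = y0 + (inner (x - y0) e / inner e e) *\<^sub>R e"
  have e_span: "e \<in> span (insert b B)"
    unfolding e_def by (meson insertI1 span_base span_diff span_mono subset_insertI yb(1) subsetD)
  have "y \<in> span (insert b B)"
    unfolding y_def using e_span y0(1) by (meson span_add span_scale span_mono subset_insertI subsetD)
  moreover have "orthogonal (x - y) a" if "a \<in> insert b B" for a
  proof -
    have x_y_e: "inner (x - y) e = 0"
      by (cases "e = 0") (simp_all add: y_def inner_diff_left inner_add_left)
    have x_y_B: "inner (x - y) z = 0" if "z \<in> span B" for z
      using y0(2) yb(2) that unfolding y_def e_def
      by (simp add: inner_diff_left inner_add_left algebra_simps)
    have "b = e + yb" by (simp add: e_def)
    then show ?thesis
      using that x_y_e x_y_B yb(1) span_base[of _ B]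
      by (auto simp: orthogonal_def inner_add_right)
  qed
  ultimately show ?case
    by (metis orthogonal_def orthogonal_to_span)
qed

lemma orthogonal_projection_unique:
  fixes S :: "'a::real_inner set"
  assumes "subspace S"
    and "y \<in> S" "\<forall>z\<in>S. inner (g - y) z = 0"
    and "y' \<in> S" "\<forall>z\<in>S. inner (g - y') z = 0"
  shows "y' = y"
proof -
  have "y - y' \<in> S" using assms by (simp add: subspace_diff)
  then have "inner (y - y') (y - y') = inner (g - y') (y - y') - inner (g - y) (y - y')"
    by (simp add: inner_diff_left)
  also have "\<dots> = 0" using assms \<open>y - y' \<in> S\<close> by simp
  finally show ?thesis by simp
qed

lemma finite_dim_subspace_imp_subspace: "finite_dim_subspace S \<Longrightarrow> subspace S"
  unfolding finite_dim_subspace_def by auto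

lemma orth_proj_in:
  fixes S :: "'a::real_inner set"
  assumes "finite_dim_subspace S"
  shows "orth_proj S g \<in> S"
proof -
  obtain B where B: "finite B" "S = span B"
    using assms unfolding finite_dim_subspace_def by blast
  then obtain y where y: "y \<in> S" "\<forall>z\<in>S. inner (g - y) z = 0"
    using orthogonal_projection_onto_span_exists by blast
  have "orth_proj S g = y"
    unfolding orth_proj_def
  proof (rule the_equality)
    show "y \<in> S \<and> (\<forall>z\<in>S. inner (g - y) z = 0)" using y by blast
    show "y' = y" if "y' \<in> S \<and> (\<forall>z\<in>S. inner (g - y') z = 0)" for y'
      using orthogonal_projection_unique[OF finite_dim_subspace_imp_subspace[OF assms] y] that
      by blast
  qed
  then show ?thesis using y(1) by simp
qed

lemma finite_dim_subspace_linear_image: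
  assumes "linear d" "finite_dim_subspace S"
  shows "finite_dim_subspace (d ` S)"
proof -
  obtain B where "finite B" "S = span B"
    using assms(2) unfolding finite_dim_subspace_def by blast
  then show ?thesis
    unfolding finite_dim_subspace_def using span_linear_image[OF assms(1)] by blast
qed

lemma hodge_solution_d0_sigma_eq_exact_data:
  assumes sol: "hodge_solution W0 W1 d0 d1 g \<sigma> u p"
    and "linear d0" "subspace W0" "d0 ` W0 \<subseteq> W1" "\<forall>x\<in>W0. d1 (d0 x) = 0"
    and "g \<in> d0 ` W0"
  shows "d0 \<sigma> = g"
proof -
  obtain \<rho> where \<rho>: "\<rho> \<in> W0" "g = d0 \<rho>" using assms(6) by blast
  have "\<sigma> \<in> W0" using sol unfolding hodge_solution_def by blast
  then have \<tau>: "\<sigma> - \<rho> \<in> W0" using \<rho>(1) assms(3) by (simp add: subspace_diff)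
  have d\<tau>: "d0 (\<sigma> - \<rho>) = d0 \<sigma> - g" using \<rho>(2) assms(2) by (simp add: linear_diff)
  have "\<forall>v\<in>W1. inner (d0 \<sigma>) v + inner (d1 u) (d1 v) + inner p v = inner g v"
    using sol unfolding hodge_solution_def by blast
  moreover have "d0 (\<sigma> - \<rho>) \<in> W1" using assms(4) \<tau> by blast
  moreover have "d1 (d0 (\<sigma> - \<rho>)) = 0" using assms(5) \<tau> by blast
  moreover have "inner p (d0 (\<sigma> - \<rho>)) = 0"
    using sol \<tau> unfolding hodge_solution_def harmonic_def by blast
  ultimately have "inner (d0 \<sigma>) (d0 (\<sigma> - \<rho>)) = inner g (d0 (\<sigma> - \<rho>))"
    by force
  then have "inner (d0 \<sigma> - g) (d0 \<sigma> - g) = 0" by (simp add: d\<tau> inner_diff_left)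
  then show ?thesis by simp
qed

lemma hodge_solution_sigma_orthogonal_closed:
  assumes "hodge_solution W0 W1 d0 d1 g \<sigma> u p" "w \<in> W0" "d0 w = 0"
  shows "inner \<sigma> w = 0"
proof -
  have "inner \<sigma> w - inner (d0 w) u = 0"
    using assms(1,2) unfolding hodge_solution_def by blast
  then show ?thesis using assms(3) by simp
qed

theorem lemma3p1:
  fixes d0 :: "'a::real_inner \<Rightarrow> 'b::real_inner"
    and d1 :: "'b \<Rightarrow> 'c::real_inner"
    and V0 Vh0 VH0 :: "'a set" and V1 Vh1 VH1 :: "'b set"
    and f :: 'b
    and \<sigma> \<sigma>h \<sigma>t \<sigma>H :: 'a and u uh ut uH p ph pt pH :: 'b
  assumes "linear d0" and "linear d1"
    and "subspace V0" and "subspace V1"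
    and "d0 ` V0 \<subseteq> V1" and "\<forall>x\<in>V0. d1 (d0 x) = 0"
    and "finite_dim_subspace Vh0" and "finite_dim_subspace Vh1"
    and "finite_dim_subspace VH0" and "finite_dim_subspace VH1"
    and "Vh0 \<subseteq> V0" and "Vh1 \<subseteq> V1" and "d0 ` Vh0 \<subseteq> Vh1"
    and "VH0 \<subseteq> Vh0" and "VH1 \<subseteq> Vh1" and "d0 ` VH0 \<subseteq> VH1"
    and "f \<in> d0 ` V0"
    and "hodge_solution V0 V1 d0 d1 f \<sigma> u p"
    and "hodge_solution Vh0 Vh1 d0 d1 (orth_proj (d0 ` Vh0) f) \<sigma>h uh ph"
    and "hodge_solution Vh0 Vh1 d0 d1 (orth_proj (d0 ` VH0) f) \<sigma>t ut pt"
    and "hodge_solution VH0 VH1 d0 d1 (orth_proj (d0 ` VH0) f) \<sigma>H uH pH"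
  shows "inner (\<sigma> - \<sigma>h) (\<sigma>t - \<sigma>H) = 0"
proof -
  have Vh0: "subspace Vh0" and VH0: "subspace VH0"
    using assms(7,9) by (simp_all add: finite_dim_subspace_imp_subspace)
  have g: "orth_proj (d0 ` VH0) f \<in> d0 ` VH0"
    using assms(1,9) by (simp add: orth_proj_in finite_dim_subspace_linear_image)
  have "d0 \<sigma>t = orth_proj (d0 ` VH0) f"
    by (rule hodge_solution_d0_sigma_eq_exact_data[OF assms(20,1) Vh0 assms(13)])
      (use g assms(6,11,14) in auto)
  moreover have "d0 \<sigma>H = orth_proj (d0 ` VH0) f"
    by (rule hodge_solution_d0_sigma_eq_exact_data[OF assms(21,1) VH0 assms(16)])
      (use g assms(6,11,14) in auto)
  ultimately have closed: "d0 (\<sigma>t - \<sigma>H) = 0" using assms(1) by (simp add: linear_diff)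
  have "\<sigma>t \<in> Vh0" "\<sigma>H \<in> VH0" using assms(20,21) unfolding hodge_solution_def by blast+
  then have in_Vh0: "\<sigma>t - \<sigma>H \<in> Vh0" using Vh0 assms(14) by (auto intro: subspace_diff)
  have "inner \<sigma> (\<sigma>t - \<sigma>H) = 0"
    using assms(11) in_Vh0 closed by (intro hodge_solution_sigma_orthogonal_closed[OF assms(18)]) auto
  moreover have "inner \<sigma>h (\<sigma>t - \<sigma>H) = 0"
    using assms(19) in_Vh0 closed by (rule hodge_solution_sigma_orthogonal_closed)
  ultimately show ?thesis by (simp only: inner_diff_left diff_self)
qed

end
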